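(* Let $s\ge2$, $n\ge1$, $m\ge1$, $i\ge1$, and let $j'\ge1$ be minimal such that $m\le a_{i,j'}$. If $i=1$, or if $i>1$ and $j'=1$, then \[ \lambda_s(n,m)\le 2^{s-1}n+j'^{\,s-2}(m-1). \]
   Context: For $s\ge1$, a sequence contains an alternation of length $s+2$ if there are distinct symbols $a\ne b$ and indices $i_1<\dots<i_{s+2}$ whose entries are alternately $a,b,a,b,\dots$. A block is a sequence of pairwise distinct symbols. $\lambda_s(n,m)$ is the maximum length of a sequence using at most $n$ distinct symbols that contains no alternation of length $s+2$ and can be written as a concatenation of at most $m$ blocks. Ackermann's function: $a_{1,j}=2^j$ ($j\ge1$), $a_{i,1}=2$ ($i\ge2$), $a_{i,j}=w\cdot a_{i-1,w}$ with $w=a_{i,j-1}$ ($i,j\ge2$). *)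

theory Defs
  imports Main "HOL-Library.Extended_Nat"
begin

definition has_alternation :: "nat list \<Rightarrow> nat \<Rightarrow> bool" where
  "has_alternation xs k \<longleftrightarrow>
     (\<exists>a b (f :: nat \<Rightarrow> nat). a \<noteq> b \<and>
        strict_mono_on {0..<k} f \<and> (\<forall>t<k. f t < length xs) \<and>
        (\<forall>t<k. xs ! (f t) = (if even t then a else b)))"

definition at_most_blocks :: "nat list \<Rightarrow> nat \<Rightarrow> bool" where
  "at_most_blocks xs m \<longleftrightarrow>
     (\<exists>bs. length bs \<le> m \<and> concat bs = xs \<and> (\<forall>b\<in>set bs. distinct b))"

definition lambda_s :: "nat \<Rightarrow> nat \<Rightarrow> nat \<Rightarrow> enat" where
  "lambda_s s n m = (SUP xs \<in> {xs. card (set xs) \<le> n \<and> \<not> has_alternation xs (s + 2)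
                                    \<and> at_most_blocks xs m}. enat (length xs))"

text \<open>Ackermann's function a_{i,j}, meaningful for i,j \<ge> 1 (value 0 elsewhere).\<close>
fun ack :: "nat \<Rightarrow> nat \<Rightarrow> nat" where
  "ack 0 j = 0"
| "ack (Suc 0) j = 2 ^ j"
| "ack (Suc (Suc i)) 0 = 0"
| "ack (Suc (Suc i)) (Suc 0) = 2"
| "ack (Suc (Suc i)) (Suc (Suc j)) =
     (let w = ack (Suc (Suc i)) (Suc j) in w * ack (Suc i) w)"

end

theory Submission
  imports Defs "HOL-Library.Sublist"
begin

(*
  Induct on s and, inside, on j the bound
    length <= 2^(s-1) * #symbols + j^(s-2) * (#blocks - 1)
  for sequences of at most 2^j blocks, cutting the blocks into two halves of at most
  2^(j-1) blocks each.
  For s = 2 (no abab) the symbol whose first occurrence comes last occupies one contiguous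
  run; removing it shows length <= 2 * #symbols - 1 + #adjacent repeats, and a
  concatenation of blocks has fewer adjacent repeats than blocks.
  For the step, symbols occurring in only one half are counted inside that half with the
  same s. A symbol occurring in both halves extends every alternation within one half by a
  letter from the other half, so on the shared symbols each half is free of alternations of
  length s + 1 and the bound for s - 1 applies. Both halves count the shared symbols, which
  costs 2^(s-2) + 2^(s-2) = 2^(s-1), and (j-1)^(s-2) + (j-1)^(s-3) <= j^(s-2).
  In both cases of the theorem a_{i,j'} = 2^j', so the minimality of j' is not needed.
*)

definition alternation :: "'a \<Rightarrow> 'a \<Rightarrow> nat \<Rightarrow> 'a list" where
  "alternation a b k = map (\<lambda>t. if even t then a else b) [0..<k]"

lemma length_alternation [simp]: "length (alternation a b k) = k"
  by (simp add: alternation_def)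

lemma nth_alternation: "t < k \<Longrightarrow> alternation a b k ! t = (if even t then a else b)"
  by (simp add: alternation_def del: upt_Suc)

lemma alternation_Suc: "alternation a b (Suc k) = alternation a b k @ [if even k then a else b]"
  by (simp add: alternation_def)

lemma alternation_Suc_Cons: "alternation a b (Suc k) = a # alternation b a k"
  by (simp add: alternation_def map_upt_Suc del: upt_Suc)

lemma set_alternation: "2 \<le> k \<Longrightarrow> set (alternation a b k) = {a, b}"
  by (induction k rule: nat_induct_at_least)
    (auto simp: alternation_Suc numeral_2_eq_2 alternation_def)

lemma subseq_obtain_indices:
  assumes "subseq ys xs"
  shows "\<exists>f. strict_mono_on {0..<length ys} f \<and>
    (\<forall>t<length ys. f t < length xs \<and> xs ! f t = ys ! t)"
  using assms
proof (induction rule: list_emb.induct)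
  case (list_emb_Nil xs)
  then show ?case by (auto simp: strict_mono_on_def)
next
  case (list_emb_Cons ys xs x)
  then obtain f where "strict_mono_on {0..<length ys} f"
    "\<forall>t<length ys. f t < length xs \<and> xs ! f t = ys ! t"
    by blast
  then show ?case by (intro exI[of _ "\<lambda>t. Suc (f t)"]) (auto simp: strict_mono_on_def)
next
  case (list_emb_Cons2 y x ys xs)
  then obtain f where "strict_mono_on {0..<length ys} f"
    "\<forall>t<length ys. f t < length xs \<and> xs ! f t = ys ! t"
    by blast
  with list_emb_Cons2.hyps(1) show ?case
    by (intro exI[of _ "case_nat 0 (\<lambda>t. Suc (f t))"])
      (auto simp: strict_mono_on_def split: nat.splits)
qed

lemma has_alternation_if_subseq:
  assumes "a \<noteq> b" and "subseq (alternation a b k) xs"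
  shows "has_alternation xs k"
proof -
  obtain f where "strict_mono_on {0..<k} f"
    "\<forall>t<k. f t < length xs \<and> xs ! f t = alternation a b k ! t"
    using subseq_obtain_indices[OF assms(2)] by auto
  with assms(1) show ?thesis
    unfolding has_alternation_def
    by (intro exI[of _ a] exI[of _ b] exI[of _ f]) (auto simp: nth_alternation)
qed

definition alternation_free :: "nat \<Rightarrow> 'a list \<Rightarrow> bool" where
  "alternation_free k xs \<longleftrightarrow> (\<forall>a b. a \<noteq> b \<longrightarrow> \<not> subseq (alternation a b k) xs)"

lemma alternation_free_if_not_has_alternation:
  "\<not> has_alternation xs k \<Longrightarrow> alternation_free k xs"
  unfolding alternation_free_def using has_alternation_if_subseq by blast

lemma alternation_free_subseq:
  "alternation_free k xs \<Longrightarrow> subseq ys xs \<Longrightarrow> alternation_free k ys"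
  unfolding alternation_free_def using subseq_order.trans by blast

lemma alternation_free_shared_left:
  assumes "alternation_free (Suc (Suc k)) (L @ R)" "1 \<le> k" "subseq ys L" "set ys \<subseteq> set R"
  shows "alternation_free (Suc k) ys"
  unfolding alternation_free_def
proof (intro allI impI notI)
  fix a b
  assume "a \<noteq> b" and alt: "subseq (alternation a b (Suc k)) ys"
  then have "{a, b} \<subseteq> set R"
    using assms(2,4) list_emb_set[OF alt] set_alternation[of "Suc k" a b] by auto
  then have "subseq [if even (Suc k) then a else b] R"
    by (simp add: subseq_singleton_left)
  moreover have "subseq (alternation a b (Suc k)) L"
    using alt assms(3) subseq_order.trans by blast
  ultimately have "subseq (alternation a b (Suc (Suc k))) (L @ R)"
    unfolding alternation_Suc[of a b "Suc k"] by (rule list_emb_append_mono[rotated])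
  with \<open>a \<noteq> b\<close> assms(1) show False
    unfolding alternation_free_def by blast
qed

lemma alternation_free_shared_right:
  assumes "alternation_free (Suc (Suc k)) (L @ R)" "1 \<le> k" "subseq ys R" "set ys \<subseteq> set L"
  shows "alternation_free (Suc k) ys"
  unfolding alternation_free_def
proof (intro allI impI notI)
  fix a b
  assume "a \<noteq> b" and alt: "subseq (alternation a b (Suc k)) ys"
  then have "b \<in> set L"
    using assms(2,4) list_emb_set[OF alt] set_alternation[of "Suc k" a b] by auto
  then have "subseq [b] L"
    by (simp add: subseq_singleton_left)
  moreover have "subseq (alternation a b (Suc k)) R"
    using alt assms(3) subseq_order.trans by blast
  ultimately have "subseq ([b] @ alternation a b (Suc k)) (L @ R)"
    by (rule list_emb_append_mono)
  then have "subseq (alternation b a (Suc (Suc k))) (L @ R)"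
    by (simp only: alternation_Suc_Cons append_Cons append_Nil)
  moreover have "b \<noteq> a"
    using \<open>a \<noteq> b\<close> by simp
  ultimately show False
    using assms(1) unfolding alternation_free_def by blast
qed

fun adjacent_repeats :: "'a list \<Rightarrow> nat" where
  "adjacent_repeats (x # y # zs) = (if x = y then 1 else 0) + adjacent_repeats (y # zs)"
| "adjacent_repeats _ = 0"

lemma adjacent_repeats_append_le:
  "adjacent_repeats (xs @ ys) \<le> adjacent_repeats xs + adjacent_repeats ys + 1"
  by (induction xs rule: adjacent_repeats.induct) (auto, (cases ys; auto)+)

lemma adjacent_repeats_append_ge:
  "adjacent_repeats xs + adjacent_repeats ys \<le> adjacent_repeats (xs @ ys)"
  by (induction xs rule: adjacent_repeats.induct) (auto, (cases ys; auto)+)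

lemma adjacent_repeats_distinct: "distinct xs \<Longrightarrow> adjacent_repeats xs = 0"
  by (induction xs rule: adjacent_repeats.induct) auto

lemma adjacent_repeats_replicate: "adjacent_repeats (replicate r a) = r - 1"
proof (induction r)
  case (Suc r)
  then show ?case by (cases r) auto
qed simp

lemma adjacent_repeats_concat:
  "\<forall>b\<in>set bs. distinct b \<Longrightarrow> adjacent_repeats (concat bs) \<le> length bs - 1"
proof (induction bs)
  case (Cons b bs)
  then show ?case
    using adjacent_repeats_append_le[of b "concat bs"]
    by (cases bs) (auto simp: adjacent_repeats_distinct)
qed simp

lemma latest_first_occurrence:
  "xs \<noteq> [] \<Longrightarrow>
    \<exists>u a w. xs = u @ a # w \<and> a \<notin> set u \<and> set w \<subseteq> insert a (set u)"
proof (induction xs rule: rev_induct)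
  case (snoc x xs)
  show ?case
  proof (cases "x \<in> set xs")
    case False
    then show ?thesis by (intro exI[of _ xs] exI[of _ x] exI[of _ "[]"]) simp
  next
    case True
    then have "xs \<noteq> []"
      by auto
    then obtain u a w where "xs = u @ a # w" "a \<notin> set u" "set w \<subseteq> insert a (set u)"
      using snoc.IH by blast
    with True show ?thesis by (intro exI[of _ u] exI[of _ a] exI[of _ "w @ [x]"]) auto
  qed
qed simp

lemma abab_free_obtain_contiguous_run:
  assumes "xs \<noteq> []" "alternation_free 4 xs"
  obtains u a r v where "xs = u @ replicate r a @ v" "r \<ge> 1" "a \<notin> set u" "a \<notin> set v"
proof -
  obtain u a w where xs: "xs = u @ a # w" and "a \<notin> set u" and w: "set w \<subseteq> insert a (set u)"
    using latest_first_occurrence[OF assms(1)] by blast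
  define r where "r = length (takeWhile (\<lambda>x. x = a) w)"
  define v where "v = dropWhile (\<lambda>x. x = a) w"
  have "takeWhile (\<lambda>x. x = a) w = replicate r a"
    unfolding r_def by (rule replicate_length_same[symmetric]) (auto dest: set_takeWhileD)
  then have w_split: "w = replicate r a @ v"
    unfolding v_def by (metis takeWhile_dropWhile_id)
  have "a \<notin> set v"
  proof
    assume "a \<in> set v"
    then obtain c v' where v: "v = c # v'" by (cases v) auto
    have "c \<noteq> a"
      using hd_dropWhile[of "\<lambda>x. x = a" w] v unfolding v_def
      by (metis list.sel(1) list.distinct(1))
    then have "c \<in> set u" and "a \<in> set v'"
      using w w_split v \<open>a \<in> set v\<close> by auto
    \<comment> \<open>c occurs before the first a, so c a c a is a subsequence\<close>
    then have "subseq ([c] @ [a, c, a]) (u @ a # replicate r a @ c # v')"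
      by (intro list_emb_append_mono subseq_Cons2 subseq_drop_many)
        (simp_all add: subseq_singleton_left)
    moreover have "alternation c a 4 = [c] @ [a, c, a]"
      by (simp add: numeral_eq_Suc alternation_Suc_Cons) (simp add: alternation_def)
    ultimately have "subseq (alternation c a 4) xs"
      using xs w_split v by simp
    with \<open>c \<noteq> a\<close> assms(2) show False
      unfolding alternation_free_def by blast
  qed
  with xs w_split \<open>a \<notin> set u\<close> show thesis
    by (intro that[of u "Suc r" a v]) auto
qed

lemma abab_free_length_bound:
  "xs \<noteq> [] \<Longrightarrow> alternation_free 4 xs \<Longrightarrow>
    length xs + 1 \<le> 2 * card (set xs) + adjacent_repeats xs"
proof (induction "card (set xs)" arbitrary: xs rule: less_induct)
  case less
  obtain u a r v where xs: "xs = u @ replicate r a @ v" and "r \<ge> 1" "a \<notin> set u" "a \<notin> set v"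
    by (rule abab_free_obtain_contiguous_run[OF less.prems])
  have repeats: "adjacent_repeats u + (r - 1) + adjacent_repeats v \<le> adjacent_repeats xs"
    using adjacent_repeats_append_ge[of u "replicate r a @ v"]
      adjacent_repeats_append_ge[of "replicate r a" v]
    by (simp add: xs adjacent_repeats_replicate)
  have card: "card (set xs) = Suc (card (set (u @ v)))"
    using xs \<open>r \<ge> 1\<close> \<open>a \<notin> set u\<close> \<open>a \<notin> set v\<close> by auto
  show ?case
  proof (cases "u @ v = []")
    case True
    then show ?thesis using xs repeats \<open>r \<ge> 1\<close> by simp
  next
    case False
    have "subseq (u @ v) xs"
      unfolding xs by (simp add: subseq_append' subseq_drop_many)
    then have "alternation_free 4 (u @ v)"
      using less.prems(2) alternation_free_subseq by blast
    then have "length (u @ v) + 1 \<le> 2 * card (set (u @ v)) + adjacent_repeats (u @ v)"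
      using less.hyps[of "u @ v"] card False by simp
    moreover have "adjacent_repeats (u @ v) \<le> adjacent_repeats u + adjacent_repeats v + 1"
      by (rule adjacent_repeats_append_le)
    ultimately show ?thesis using xs repeats card by simp
  qed
qed

lemma abab_free_blocks_length_bound:
  assumes "\<forall>b\<in>set bs. distinct b" "alternation_free 4 (concat bs)"
  shows "length (concat bs) \<le> 2 * card (set (concat bs)) + (length bs - 1)"
proof (cases "concat bs = []")
  case False
  then show ?thesis
    using abab_free_length_bound[OF False assms(2)] adjacent_repeats_concat[OF assms(1)] by simp
qed (simp only: list.size(3) zero_le)

definition block_bound :: "nat \<Rightarrow> nat \<Rightarrow> nat \<Rightarrow> bool" where
  "block_bound s j c \<longleftrightarrow>
     (\<forall>bs :: nat list list. length bs \<le> 2 ^ j \<longrightarrow> (\<forall>b\<in>set bs. distinct b) \<longrightarrow>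
        alternation_free (s + 2) (concat bs) \<longrightarrow>
        length (concat bs) \<le> 2 ^ (s - 1) * card (set (concat bs)) + c * (length bs - 1))"

lemma block_boundD:
  fixes bs :: "nat list list"
  assumes "block_bound s j c" "length bs \<le> 2 ^ j" "\<forall>b\<in>set bs. distinct b"
    "alternation_free (s + 2) (concat bs)"
  shows "length (concat bs) \<le> 2 ^ (s - 1) * card (set (concat bs)) + c * (length bs - 1)"
  using assms unfolding block_bound_def by blast

lemma block_bound_filter:
  fixes bs :: "nat list list"
  assumes "block_bound s j c" "length bs \<le> 2 ^ j" "\<forall>b\<in>set bs. distinct b"
    "alternation_free (s + 2) (filter P (concat bs))"
  shows "length (filter P (concat bs)) \<le>
    2 ^ (s - 1) * card (set (filter P (concat bs))) + c * (length bs - 1)"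
  using block_boundD[OF assms(1), of "map (filter P) bs"] assms(2-4) by (simp add: filter_concat)

lemma block_bound_abab_free: "block_bound 2 j 1"
  unfolding block_bound_def using abab_free_blocks_length_bound[where 'a = nat] by simp

lemma block_bound_single_block: "block_bound s 0 c"
  unfolding block_bound_def
proof (intro allI impI)
  fix bs :: "nat list list"
  assume "length bs \<le> 2 ^ 0" "\<forall>b\<in>set bs. distinct b"
  then have "length (concat bs) = card (set (concat bs))"
    by (cases bs) (auto simp: distinct_card)
  also have "\<dots> \<le> 2 ^ (s - 1) * card (set (concat bs))"
    by simp
  finally show "length (concat bs) \<le> 2 ^ (s - 1) * card (set (concat bs)) + c * (length bs - 1)"
    by simp
qed

lemma power_Suc_add_power_le: "j ^ Suc t + j ^ t \<le> Suc j ^ Suc t"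
proof -
  have "j ^ Suc t + j ^ t = j ^ t * Suc j"
    by simp
  also have "\<dots> \<le> Suc j ^ t * Suc j"
    by (intro mult_le_mono1 power_mono) auto
  finally show ?thesis
    by (simp add: mult.commute)
qed

lemma card_Un_shared:
  assumes "finite A" "finite B"
  shows "card (A \<union> B) = card (A - B) + card (B - A) + card (A \<inter> B)"
  using card_Un_Int[OF assms] card_Int_Diff[OF assms(1), of B] card_Int_Diff[OF assms(2), of A]
  by (simp add: Int_commute)

lemma block_bound_shared_split:
  fixes hs :: "nat list list"
  assumes "block_bound s j c" "block_bound (Suc s) j d"
    "length hs \<le> 2 ^ j" "\<forall>b\<in>set hs. distinct b"
    "alternation_free (Suc s + 2) (concat hs)"
    "alternation_free (s + 2) (filter (\<lambda>x. x \<in> G) (concat hs))"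
  shows "length (concat hs) \<le>
    2 ^ s * card (set (concat hs) - G) + 2 ^ (s - 1) * card (set (concat hs) \<inter> G) +
    (c + d) * (length hs - 1)"
proof -
  let ?H = "concat hs"
  have "alternation_free (Suc s + 2) (filter (\<lambda>x. x \<notin> G) ?H)"
    using assms(5) alternation_free_subseq subseq_filter_left by blast
  then have local:
    "length (filter (\<lambda>x. x \<notin> G) ?H) \<le> 2 ^ s * card (set ?H - G) + d * (length hs - 1)"
    using block_bound_filter[OF assms(2-4)] by (simp add: set_diff_eq)
  have shared:
    "length (filter (\<lambda>x. x \<in> G) ?H) \<le> 2 ^ (s - 1) * card (set ?H \<inter> G) + c * (length hs - 1)"
    using block_bound_filter[OF assms(1,3,4,6)] by (simp add: Int_def)
  have "length ?H = length (filter (\<lambda>x. x \<notin> G) ?H) + length (filter (\<lambda>x. x \<in> G) ?H)"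
    using sum_length_filter_compl[of "\<lambda>x. x \<in> G" ?H] by simp
  with local shared show ?thesis
    using add_mult_distrib[of c d "length hs - 1"] by linarith
qed

lemma block_bound_Suc:
  assumes "1 \<le> s" "block_bound s j c" "block_bound (Suc s) j d" "c + d \<le> e"
  shows "block_bound (Suc s) (Suc j) e"
  unfolding block_bound_def
proof (intro allI impI)
  fix bs :: "nat list list"
  assume len: "length bs \<le> 2 ^ Suc j" and distinct: "\<forall>b\<in>set bs. distinct b"
    and free: "alternation_free (Suc s + 2) (concat bs)"
  define ls rs where "ls = take (2 ^ j) bs" and "rs = drop (2 ^ j) bs"
  define L R where "L = concat ls" and "R = concat rs"
  define G where "G = set L \<inter> set R"
  have split: "concat bs = L @ R"
    unfolding L_def R_def ls_def rs_def by (metis append_take_drop_id concat_append)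
  have lengths: "length ls \<le> 2 ^ j" "length rs \<le> 2 ^ j"
    "(length ls - 1) + (length rs - 1) \<le> length bs - 1"
    using len unfolding ls_def rs_def by auto
  have distinct_halves: "\<forall>b\<in>set ls. distinct b" "\<forall>b\<in>set rs. distinct b"
    using distinct unfolding ls_def rs_def by (meson in_set_takeD in_set_dropD)+
  have free_LR: "alternation_free (Suc (Suc (Suc s))) (L @ R)"
    using free split by simp
  have "alternation_free (Suc s + 2) L" "alternation_free (Suc s + 2) R"
    using free split alternation_free_subseq by (auto simp: subseq_drop_many)
  moreover have "alternation_free (s + 2) (filter (\<lambda>x. x \<in> G) L)"
    "alternation_free (s + 2) (filter (\<lambda>x. x \<in> G) R)"
    using alternation_free_shared_left[OF free_LR, of "filter (\<lambda>x. x \<in> G) L"]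
      alternation_free_shared_right[OF free_LR, of "filter (\<lambda>x. x \<in> G) R"]
    by (auto simp: G_def)
  moreover have "set L \<inter> G = G" "set R \<inter> G = G"
    by (auto simp: G_def)
  ultimately have halves:
    "length L \<le> 2 ^ s * card (set L - G) + 2 ^ (s - 1) * card G + (c + d) * (length ls - 1)"
    "length R \<le> 2 ^ s * card (set R - G) + 2 ^ (s - 1) * card G + (c + d) * (length rs - 1)"
    using block_bound_shared_split[OF assms(2,3)] lengths distinct_halves
    unfolding L_def R_def by metis+
  have "card (set (concat bs)) = card (set L - G) + card (set R - G) + card G"
    using card_Un_shared[of "set L" "set R"] unfolding split G_def by (simp add: Diff_Int)
  then have "2 ^ (Suc s - 1) * card (set (concat bs)) =
      2 ^ s * card (set L - G) + 2 ^ s * card (set R - G) + 2 ^ s * card G"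
    by (simp add: distrib_left)
  moreover have "(c + d) * (length ls - 1) + (c + d) * (length rs - 1) \<le> e * (length bs - 1)"
    using lengths(3) assms(4) by (metis add_mult_distrib2 mult_le_mono)
  moreover have "2 ^ (s - 1) * card G + 2 ^ (s - 1) * card G = 2 ^ s * card G"
    using assms(1) by (cases s) auto
  moreover have "length (concat bs) = length L + length R"
    by (simp add: split)
  ultimately show
    "length (concat bs) \<le> 2 ^ (Suc s - 1) * card (set (concat bs)) + e * (length bs - 1)"
    using halves by linarith
qed

lemma block_bound_power: "2 \<le> s \<Longrightarrow> block_bound s j (j ^ (s - 2))"
proof (induction s arbitrary: j rule: nat_induct_at_least)
  case base
  then show ?case using block_bound_abab_free by simp
next
  case (Suc s)
  note shorter = Suc.IH
  show ?case
  proof (induction j)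
    case 0
    then show ?case by (rule block_bound_single_block)
  next
    case (Suc j)
    obtain t where s: "s = Suc (Suc t)"
      using \<open>2 \<le> s\<close> by (metis add_2_eq_Suc le_iff_add)
    have "j ^ t + j ^ Suc t \<le> Suc j ^ Suc t"
      using power_Suc_add_power_le[of j t] by linarith
    with s show ?case
      by (intro block_bound_Suc[OF _ shorter Suc.IH]) simp_all
  qed
qed

theorem mainTheorem9:
  fixes s n m i j' :: nat
  assumes "s \<ge> 2" and "n \<ge> 1" and "m \<ge> 1" and "i \<ge> 1"
    and "j' \<ge> 1" and "m \<le> ack i j'"
    and "\<forall>j. 1 \<le> j \<and> j < j' \<longrightarrow> \<not> (m \<le> ack i j)"
    and "i = 1 \<or> (i > 1 \<and> j' = 1)"
  shows "lambda_s s n m \<le> enat (2 ^ (s - 1) * n + j' ^ (s - 2) * (m - 1))"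
proof -
  have "ack i j' = 2 ^ j'"
    using assms(8) by (cases "(i, j')" rule: ack.cases) auto
  with assms(6) have m_le: "m \<le> 2 ^ j'"
    by simp
  show ?thesis
    unfolding lambda_s_def
  proof (rule SUP_least, safe)
    fix xs assume "card (set xs) \<le> n" "\<not> has_alternation xs (s + 2)" "at_most_blocks xs m"
    then obtain bs where bs: "length bs \<le> m" "concat bs = xs" "\<forall>b\<in>set bs. distinct b"
      unfolding at_most_blocks_def by blast
    have "length xs \<le> 2 ^ (s - 1) * card (set xs) + j' ^ (s - 2) * (length bs - 1)"
      using block_boundD[OF block_bound_power[OF assms(1)], of bs j'] bs m_le
        alternation_free_if_not_has_alternation[OF \<open>\<not> has_alternation xs (s + 2)\<close>]
      by simp
    also have "\<dots> \<le> 2 ^ (s - 1) * n + j' ^ (s - 2) * (m - 1)"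
      using \<open>card (set xs) \<le> n\<close> bs(1) by (intro add_mono mult_le_mono2) auto
    finally show "enat (length xs) \<le> enat (2 ^ (s - 1) * n + j' ^ (s - 2) * (m - 1))"
      by simp
  qed
qed

end
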